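(* Let $\mathcal{U}$ be an ultrafilter over a set $\mathcal{I}$ and let $\mathcal{A}$ be a $C^{\ast}$-algebra faithfully and non-degenerately represented on $\mathcal{H}$. Embed $\mathcal{A}$ in $\mathcal{A}^{s\mathcal{U}}/J$ via constant families $a\mapsto[(a)_{i\in\mathcal{I}}]$. Then the image of $\mathcal{A}$ is an essential ideal of $\mathcal{A}^{s\mathcal{U}}/J$.
   Context: $\mathcal{A}^{\mathcal{U}}$ is the quotient of the bounded families $\prod_{\mathcal{I}}\mathcal{A}$ by those with $\lim_{\mathcal{U}}\|a_i\|=0$. A family $(a_i)$ is $\mathcal{U}$-strict convergent to $a_{\mathcal{U}}\in B(\mathcal{H})$ if for every $x\in\mathcal{A}$ and $\varepsilon>0$, $\{i:\|a_ix-a_{\mathcal{U}}x\|<\varepsilon,\ \|xa_i-xa_{\mathcal{U}}\|<\varepsilon\}\in\mathcal{U}$. $\mathcal{A}^{s\mathcal{U}}\subset\mathcal{A}^{\mathcal{U}}$ is the $C^{\ast}$-subalgebra of classes that are $\mathcal{U}$-strict convergent to some operator in $B(\mathcal{H})$, and $J\subset\mathcal{A}^{s\mathcal{U}}$ is the closed ideal of classes $\mathcal{U}$-strict convergent to $0$. An ideal $I$ of a $C^{\ast}$-algebra is essential if every nonzero ideal intersects $I$ nontrivially. *)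

theory Defs
  imports "HOL-Analysis.Analysis"
begin

class complex_hilbert = ab_group_add +
  fixes scaleC :: "complex \<Rightarrow> 'a \<Rightarrow> 'a"
    and cinner :: "'a \<Rightarrow> 'a \<Rightarrow> complex"
  assumes scaleC_add_right: "scaleC c (x + y) = scaleC c x + scaleC c y"
    and scaleC_add_left: "scaleC (c + d) x = scaleC c x + scaleC d x"
    and scaleC_scaleC: "scaleC c (scaleC d x) = scaleC (c * d) x"
    and scaleC_one: "scaleC 1 x = x"
    and cinner_add_right: "cinner x (y + z) = cinner x y + cinner x z"
    and cinner_scaleC_right: "cinner x (scaleC c y) = c * cinner x y"
    and cinner_commute: "cinner y x = cnj (cinner x y)"
    and cinner_nonneg: "0 \<le> Re (cinner x x)"
    and cinner_eq_zero: "cinner x x = 0 \<Longrightarrow> x = 0"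
    and hilbert_complete:
      "(\<forall>e>0. \<exists>N. \<forall>m\<ge>N. \<forall>n\<ge>N. sqrt (Re (cinner ((X::nat \<Rightarrow> 'a) m - X n) (X m - X n))) < e) \<Longrightarrow>
       (\<exists>L. \<forall>e>0. \<exists>N. \<forall>n\<ge>N. sqrt (Re (cinner (X n - L) (X n - L))) < e)"

definition hnorm :: "'h::complex_hilbert \<Rightarrow> real" where
  "hnorm x = sqrt (Re (cinner x x))"

definition bounded_op :: "('h::complex_hilbert \<Rightarrow> 'h) \<Rightarrow> bool" where
  "bounded_op T \<longleftrightarrow> (\<forall>x y. T (x + y) = T x + T y) \<and> (\<forall>c x. T (scaleC c x) = scaleC c (T x))
     \<and> (\<exists>K. \<forall>x. hnorm (T x) \<le> K * hnorm x)"

definition opnorm :: "('h::complex_hilbert \<Rightarrow> 'h) \<Rightarrow> real" where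
  "opnorm T = Sup {hnorm (T x) | x. hnorm x \<le> 1}"

definition adjoint :: "('h::complex_hilbert \<Rightarrow> 'h) \<Rightarrow> ('h \<Rightarrow> 'h)" where
  "adjoint T = (SOME S. \<forall>x y. cinner (T x) y = cinner x (S y))"

definition op_add :: "('h::complex_hilbert \<Rightarrow> 'h) \<Rightarrow> ('h \<Rightarrow> 'h) \<Rightarrow> ('h \<Rightarrow> 'h)" where
  "op_add S T = (\<lambda>x. S x + T x)"

definition op_diff :: "('h::complex_hilbert \<Rightarrow> 'h) \<Rightarrow> ('h \<Rightarrow> 'h) \<Rightarrow> ('h \<Rightarrow> 'h)" where
  "op_diff S T = (\<lambda>x. S x - T x)"

definition op_scale :: "complex \<Rightarrow> ('h::complex_hilbert \<Rightarrow> 'h) \<Rightarrow> ('h \<Rightarrow> 'h)" where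
  "op_scale c T = (\<lambda>x. scaleC c (T x))"

definition op_zero :: "'h::complex_hilbert \<Rightarrow> 'h" where
  "op_zero = (\<lambda>x. 0)"

text \<open>A (concrete) C*-algebra on H: a norm-closed *-subalgebra of B(H).
  Being a set of operators on H, it is faithfully represented on H.\<close>

definition cstar_subalgebra :: "('h::complex_hilbert \<Rightarrow> 'h) set \<Rightarrow> bool" where
  "cstar_subalgebra A \<longleftrightarrow>
     (\<forall>a\<in>A. bounded_op a) \<and> op_zero \<in> A \<and>
     (\<forall>a\<in>A. \<forall>b\<in>A. op_add a b \<in> A) \<and>
     (\<forall>c. \<forall>a\<in>A. op_scale c a \<in> A) \<and>
     (\<forall>a\<in>A. \<forall>b\<in>A. a \<circ> b \<in> A) \<and>
     (\<forall>a\<in>A. adjoint a \<in> A) \<and>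
     (\<forall>T. bounded_op T \<and> (\<forall>e>0. \<exists>a\<in>A. opnorm (op_diff T a) < e) \<longrightarrow> T \<in> A)"

text \<open>Non-degeneracy: the closed linear span of A H is H.\<close>

definition nondegenerate :: "('h::complex_hilbert \<Rightarrow> 'h) set \<Rightarrow> bool" where
  "nondegenerate A \<longleftrightarrow>
     (\<forall>\<xi>. \<forall>e>0. \<exists>ps :: (complex \<times> ('h \<Rightarrow> 'h) \<times> 'h) list.
        (\<forall>(c, a, \<eta>) \<in> set ps. a \<in> A) \<and>
        hnorm (\<xi> - sum_list (map (\<lambda>(c, a, \<eta>). scaleC c (a \<eta>)) ps)) < e)"

definition ultrafilter :: "'i filter \<Rightarrow> bool" where
  "ultrafilter U \<longleftrightarrow> U \<noteq> bot \<and> (\<forall>P. eventually P U \<or> eventually (\<lambda>i. \<not> P i) U)"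

definition bdd_family :: "('h::complex_hilbert \<Rightarrow> 'h) set \<Rightarrow> ('i \<Rightarrow> 'h \<Rightarrow> 'h) \<Rightarrow> bool" where
  "bdd_family A f \<longleftrightarrow> (\<forall>i. f i \<in> A) \<and> (\<exists>M. \<forall>i. opnorm (f i) \<le> M)"

definition strict_conv ::
  "'i filter \<Rightarrow> ('h::complex_hilbert \<Rightarrow> 'h) set \<Rightarrow> ('i \<Rightarrow> 'h \<Rightarrow> 'h) \<Rightarrow> ('h \<Rightarrow> 'h) \<Rightarrow> bool" where
  "strict_conv U A f T \<longleftrightarrow>
     (\<forall>x\<in>A. \<forall>e>0. eventually (\<lambda>i. opnorm (op_diff (f i \<circ> x) (T \<circ> x)) < e
                                 \<and> opnorm (op_diff (x \<circ> f i) (x \<circ> T)) < e) U)"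

text \<open>Representatives of A^{sU}: bounded families U-strict convergent to some operator in B(H).\<close>

definition sfam :: "'i filter \<Rightarrow> ('h::complex_hilbert \<Rightarrow> 'h) set \<Rightarrow> ('i \<Rightarrow> 'h \<Rightarrow> 'h) set" where
  "sfam U A = {f. bdd_family A f \<and> (\<exists>T. bounded_op T \<and> strict_conv U A f T)}"

text \<open>Representatives of J: those U-strict convergent to 0 (this includes the
  U-null families, so quotienting sfam by jfam gives A^{sU}/J).\<close>

definition jfam :: "'i filter \<Rightarrow> ('h::complex_hilbert \<Rightarrow> 'h) set \<Rightarrow> ('i \<Rightarrow> 'h \<Rightarrow> 'h) set" where
  "jfam U A = {f \<in> sfam U A. strict_conv U A f op_zero}"

definition qcls :: "'i filter \<Rightarrow> ('h::complex_hilbert \<Rightarrow> 'h) set \<Rightarrow> ('i \<Rightarrow> 'h \<Rightarrow> 'h) \<Rightarrow> ('i \<Rightarrow> 'h \<Rightarrow> 'h) set" where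
  "qcls U A f = {g \<in> sfam U A. (\<lambda>i. op_diff (f i) (g i)) \<in> jfam U A}"

definition quot :: "'i filter \<Rightarrow> ('h::complex_hilbert \<Rightarrow> 'h) set \<Rightarrow> ('i \<Rightarrow> 'h \<Rightarrow> 'h) set set" where
  "quot U A = qcls U A ` sfam U A"

definition qrep :: "('i \<Rightarrow> 'h \<Rightarrow> 'h) set \<Rightarrow> ('i \<Rightarrow> 'h \<Rightarrow> 'h)" where
  "qrep X = (SOME f. f \<in> X)"

definition qzero :: "'i filter \<Rightarrow> ('h::complex_hilbert \<Rightarrow> 'h) set \<Rightarrow> ('i \<Rightarrow> 'h \<Rightarrow> 'h) set" where
  "qzero U A = qcls U A (\<lambda>i. op_zero)"

definition qadd :: "'i filter \<Rightarrow> ('h::complex_hilbert \<Rightarrow> 'h) set \<Rightarrow> ('i \<Rightarrow> 'h \<Rightarrow> 'h) set \<Rightarrow> ('i \<Rightarrow> 'h \<Rightarrow> 'h) set \<Rightarrow> ('i \<Rightarrow> 'h \<Rightarrow> 'h) set" where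
  "qadd U A X Y = qcls U A (\<lambda>i. op_add (qrep X i) (qrep Y i))"

definition qdiff :: "'i filter \<Rightarrow> ('h::complex_hilbert \<Rightarrow> 'h) set \<Rightarrow> ('i \<Rightarrow> 'h \<Rightarrow> 'h) set \<Rightarrow> ('i \<Rightarrow> 'h \<Rightarrow> 'h) set \<Rightarrow> ('i \<Rightarrow> 'h \<Rightarrow> 'h) set" where
  "qdiff U A X Y = qcls U A (\<lambda>i. op_diff (qrep X i) (qrep Y i))"

definition qscale :: "'i filter \<Rightarrow> ('h::complex_hilbert \<Rightarrow> 'h) set \<Rightarrow> complex \<Rightarrow> ('i \<Rightarrow> 'h \<Rightarrow> 'h) set \<Rightarrow> ('i \<Rightarrow> 'h \<Rightarrow> 'h) set" where
  "qscale U A c X = qcls U A (\<lambda>i. op_scale c (qrep X i))"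

definition qmul :: "'i filter \<Rightarrow> ('h::complex_hilbert \<Rightarrow> 'h) set \<Rightarrow> ('i \<Rightarrow> 'h \<Rightarrow> 'h) set \<Rightarrow> ('i \<Rightarrow> 'h \<Rightarrow> 'h) set \<Rightarrow> ('i \<Rightarrow> 'h \<Rightarrow> 'h) set" where
  "qmul U A X Y = qcls U A (\<lambda>i. qrep X i \<circ> qrep Y i)"

definition qnorm :: "'i filter \<Rightarrow> ('h::complex_hilbert \<Rightarrow> 'h) set \<Rightarrow> ('i \<Rightarrow> 'h \<Rightarrow> 'h) set \<Rightarrow> real" where
  "qnorm U A X = Inf ((\<lambda>n. Lim U (\<lambda>i. opnorm (op_diff (qrep X i) (n i)))) ` jfam U A)"

definition qideal :: "'i filter \<Rightarrow> ('h::complex_hilbert \<Rightarrow> 'h) set \<Rightarrow> ('i \<Rightarrow> 'h \<Rightarrow> 'h) set set \<Rightarrow> bool" where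
  "qideal U A K \<longleftrightarrow> K \<subseteq> quot U A \<and> qzero U A \<in> K \<and>
     (\<forall>X\<in>K. \<forall>Y\<in>K. qadd U A X Y \<in> K) \<and>
     (\<forall>c. \<forall>X\<in>K. qscale U A c X \<in> K) \<and>
     (\<forall>X\<in>quot U A. \<forall>Y\<in>K. qmul U A X Y \<in> K \<and> qmul U A Y X \<in> K)"

definition qclosed :: "'i filter \<Rightarrow> ('h::complex_hilbert \<Rightarrow> 'h) set \<Rightarrow> ('i \<Rightarrow> 'h \<Rightarrow> 'h) set set \<Rightarrow> bool" where
  "qclosed U A K \<longleftrightarrow>
     (\<forall>X\<in>quot U A. (\<forall>e>0. \<exists>Y\<in>K. qnorm U A (qdiff U A X Y) < e) \<longrightarrow> X \<in> K)"

definition qessential :: "'i filter \<Rightarrow> ('h::complex_hilbert \<Rightarrow> 'h) set \<Rightarrow> ('i \<Rightarrow> 'h \<Rightarrow> 'h) set set \<Rightarrow> bool" where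
  "qessential U A E \<longleftrightarrow>
     (\<forall>K. qideal U A K \<and> K \<noteq> {qzero U A} \<longrightarrow> K \<inter> E \<noteq> {qzero U A})"

definition const_embed :: "'i filter \<Rightarrow> ('h::complex_hilbert \<Rightarrow> 'h) set \<Rightarrow> ('h \<Rightarrow> 'h) \<Rightarrow> ('i \<Rightarrow> 'h \<Rightarrow> 'h) set" where
  "const_embed U A a = qcls U A (\<lambda>i. a)"

end

theory Submission
  imports Defs
begin

text \<open>A bounded family that converges U-strictly is determined modulo J by its strict limit T
  (by nondegeneracy of A), so A^{sU}/J is identified with the set of such limits, the constant class
  of a \<in> A corresponding to a itself. Every strict limit T is a multiplier of A: T a and a T are
  norm limits of f_i a and a f_i, hence lie in the closed algebra A; this makes the image of A an
  ideal. Along strictly convergent bounded families the operator norm is lower semicontinuous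
  (test on the dense span of A H), so the quotient norm of [T] dominates the norm of T, and the image
  is closed. Finally, if T \<noteq> 0 then T a \<noteq> 0 for some a \<in> A by nondegeneracy, and
  [T][a] = [T a] is a nonzero element of the image of A lying in every ideal that contains [T].\<close>

lemma scaleC_zero_right[simp]: "scaleC c (0::'h::complex_hilbert) = 0"
proof -
  have "scaleC c 0 = scaleC c 0 + scaleC c 0" using scaleC_add_right[of c 0 0] by (simp only: add_0_right add_0_left)
  then show ?thesis by (simp only: add_cancel_right_right)
qed

lemma scaleC_zero_left[simp]: "scaleC 0 (x::'h::complex_hilbert) = 0"
proof -
  have "scaleC 0 x = scaleC 0 x + scaleC 0 x" using scaleC_add_left[of 0 0 x] by (simp only: add_0_right add_0_left)
  then show ?thesis by (simp only: add_cancel_right_right)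
qed

lemma scaleC_minus_right: "scaleC c (- (x::'h::complex_hilbert)) = - scaleC c x"
proof -
  have "scaleC c (x + - x) = scaleC c x + scaleC c (- x)" by (rule scaleC_add_right)
  then have h: "scaleC c x + scaleC c (- x) = 0" by simp
  from minus_unique[OF h] show ?thesis by simp
qed

lemma scaleC_diff_right: "scaleC c ((x::'h::complex_hilbert) - y) = scaleC c x - scaleC c y"
  using scaleC_add_right[of c x "- y"] by (simp add: scaleC_minus_right)

lemma scaleC_minus_one: "scaleC (-1) (x::'h::complex_hilbert) = - x"
proof -
  have "scaleC (1 + -1) x = scaleC 1 x + scaleC (-1) x" by (rule scaleC_add_left)
  then have h: "x + scaleC (-1) x = 0" by (simp add: scaleC_one)
  from minus_unique[OF h] show ?thesis by simp
qed

lemma cinner_zero_right[simp]: "cinner (x::'h::complex_hilbert) 0 = 0"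
proof -
  have "cinner x 0 = cinner x 0 + cinner x 0" using cinner_add_right[of x 0 0] by (simp only: add_0_right add_0_left)
  then show ?thesis by (simp only: add_cancel_right_right)
qed

lemma cinner_zero_left[simp]: "cinner 0 (x::'h::complex_hilbert) = 0"
  by (subst cinner_commute) simp

lemma cinner_add_left: "cinner ((x::'h::complex_hilbert) + y) z = cinner x z + cinner y z"
  by (subst (1 2 3) cinner_commute) (simp add: cinner_add_right)

lemma cinner_scaleC_left: "cinner (scaleC c (x::'h::complex_hilbert)) y = cnj c * cinner x y"
  by (subst (1 2) cinner_commute) (simp add: cinner_scaleC_right)

lemma cinner_minus_right: "cinner (x::'h::complex_hilbert) (- y) = - cinner x y"
proof -
  have "cinner x (y + - y) = cinner x y + cinner x (- y)" by (rule cinner_add_right)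
  then have h: "cinner x y + cinner x (- y) = 0" by simp
  from minus_unique[OF h] show ?thesis by simp
qed

lemma cinner_minus_left: "cinner (- (x::'h::complex_hilbert)) y = - cinner x y"
  by (subst (1 2) cinner_commute) (simp add: cinner_minus_right)

lemma cinner_diff_right: "cinner (x::'h::complex_hilbert) (y - z) = cinner x y - cinner x z"
  using cinner_add_right[of x y "- z"] by (simp add: cinner_minus_right)

lemma cinner_diff_left: "cinner ((x::'h::complex_hilbert) - y) z = cinner x z - cinner y z"
  using cinner_add_left[of x "- y" z] by (simp add: cinner_minus_left)

lemma cinner_self_real: "Im (cinner (x::'h::complex_hilbert) x) = 0"
proof -
  have "Im (cinner x x) = Im (cnj (cinner x x))" using cinner_commute[of x x] by (rule arg_cong)
  then show ?thesis by simp
qed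

lemma hnorm_nonneg: "0 \<le> hnorm (x::'h::complex_hilbert)" by (simp add: hnorm_def cinner_nonneg)

lemma hnorm_power2: "(hnorm (x::'h::complex_hilbert))^2 = Re (cinner x x)"
  unfolding hnorm_def by (rule real_sqrt_pow2[OF cinner_nonneg])

lemma hnorm_zero[simp]: "hnorm (0::'h::complex_hilbert) = 0" by (simp add: hnorm_def)

lemma hnorm_eq_zero: "hnorm (x::'h::complex_hilbert) = 0 \<longleftrightarrow> x = 0"
proof
  assume "hnorm x = 0"
  then have "Re (cinner x x) = 0" using hnorm_power2[of x] by simp
  then have "cinner x x = 0" using cinner_self_real[of x] by (simp add: complex_eq_iff)
  then show "x = 0" by (rule cinner_eq_zero)
qed simp

lemma hnorm_scaleC: "hnorm (scaleC c (x::'h::complex_hilbert)) = cmod c * hnorm x"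
proof -
  have "cinner (scaleC c x) (scaleC c x) = (cnj c * c) * cinner x x"
    by (simp add: cinner_scaleC_left cinner_scaleC_right)
  also have "cnj c * c = complex_of_real ((cmod c)^2)"
    by (subst complex_norm_square) (simp add: mult.commute)
  finally have "Re (cinner (scaleC c x) (scaleC c x)) = (cmod c)^2 * Re (cinner x x)"
    by simp
  then show ?thesis unfolding hnorm_def by (simp add: real_sqrt_mult)
qed

lemma hnorm_minus: "hnorm (- (x::'h::complex_hilbert)) = hnorm x"
  using hnorm_scaleC[of "-1" x] by (simp add: scaleC_minus_one)

lemma hnorm_diff_commute: "hnorm ((x::'h::complex_hilbert) - y) = hnorm (y - x)"
  using hnorm_minus[of "x - y"] by simp

lemma Re_cinner_commute: "Re (cinner (y::'h::complex_hilbert) x) = Re (cinner x y)"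
proof -
  have "Re (cinner y x) = Re (cnj (cinner x y))" using cinner_commute[of y x] by (rule arg_cong)
  then show ?thesis by simp
qed

lemma Re_cinner_self_diff_real_scaleC:
  fixes x y :: "'h::complex_hilbert"
  shows "Re (cinner (x - scaleC (complex_of_real r) y) (x - scaleC (complex_of_real r) y))
     = Re (cinner x x) - 2 * r * Re (cinner x y) + r * r * Re (cinner y y)"
proof -
  have "cinner (x - scaleC (complex_of_real r) y) (x - scaleC (complex_of_real r) y)
     = cinner x x - complex_of_real r * cinner y x - complex_of_real r * (cinner x y - complex_of_real r * cinner y y)"
    by (simp only: cinner_diff_left cinner_diff_right cinner_scaleC_left cinner_scaleC_right complex_cnj_complex_of_real)
  then have "Re (cinner (x - scaleC (complex_of_real r) y) (x - scaleC (complex_of_real r) y))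
     = Re (cinner x x) - r * Re (cinner y x) - r * (Re (cinner x y) - r * Re (cinner y y))"
    by simp
  then show ?thesis using Re_cinner_commute[of y x] by (simp add: algebra_simps)
qed

lemma Re_cinner_le_hnorm_mult: "Re (cinner (x::'h::complex_hilbert) y) \<le> hnorm x * hnorm y"
proof (cases "y = 0")
  case True then show ?thesis by simp
next
  case False
  define a where "a = Re (cinner x y)"
  define h where "h = hnorm y"
  have hy: "h > 0" using False hnorm_eq_zero[of y] hnorm_nonneg[of y] h_def by linarith
  have yy: "Re (cinner y y) = h * h" by (simp add: h_def hnorm_power2[symmetric] power2_eq_square)
  have xx: "Re (cinner x x) = hnorm x * hnorm x" by (simp add: hnorm_power2[symmetric] power2_eq_square)
  define r where "r = a / (h * h)"
  have "0 \<le> Re (cinner (x - scaleC (complex_of_real r) y) (x - scaleC (complex_of_real r) y))"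
    by (rule cinner_nonneg)
  also have "\<dots> = hnorm x * hnorm x - 2 * r * a + r * r * (h * h)"
    unfolding Re_cinner_self_diff_real_scaleC yy xx a_def ..
  also have "\<dots> = hnorm x * hnorm x - a * a / (h * h)"
    using hy by (simp add: r_def field_simps)
  finally have "a * a \<le> (hnorm x * h) * (hnorm x * h)" using hy
    by (simp add: field_simps)
  then have "\<bar>a\<bar> \<le> hnorm x * h"
    using hnorm_nonneg[of x] hy by (metis abs_le_square_iff abs_mult_self_eq abs_of_nonneg mult_nonneg_nonneg power2_eq_square less_imp_le)
  then show ?thesis unfolding a_def h_def by simp
qed

lemma hnorm_triangle: "hnorm ((x::'h::complex_hilbert) + y) \<le> hnorm x + hnorm y"
proof -
  have e: "(hnorm (x+y))^2 = Re (cinner x x) + Re (cinner x y) + Re (cinner y x) + Re (cinner y y)"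
    by (simp add: hnorm_power2 cinner_add_left cinner_add_right)
  have 1: "Re (cinner x y) \<le> hnorm x * hnorm y"
    by (rule Re_cinner_le_hnorm_mult)
  have 2: "Re (cinner y x) \<le> hnorm x * hnorm y"
    using Re_cinner_le_hnorm_mult[of y x] by (simp add: mult.commute)
  have 3: "(hnorm x + hnorm y)^2 = Re (cinner x x) + 2 * (hnorm x * hnorm y) + Re (cinner y y)"
    by (simp add: hnorm_power2[symmetric] power2_sum)
  have "(hnorm (x+y))^2 \<le> (hnorm x + hnorm y)^2"
    unfolding e 3 using 1 2 by linarith
  then show ?thesis by (rule power2_le_imp_le) (simp add: add_nonneg_nonneg hnorm_nonneg)
qed

lemma hnorm_triangle_diff: "hnorm ((x::'h::complex_hilbert) - z) \<le> hnorm (x - y) + hnorm (y - z)"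
  using hnorm_triangle[of "x - y" "y - z"] by simp

lemma hnorm_diff_le: "hnorm ((x::'h::complex_hilbert) - y) \<le> hnorm x + hnorm y"
  using hnorm_triangle[of x "- y"] hnorm_minus[of y] by simp

lemma bounded_op_add_apply: "bounded_op T \<Longrightarrow> T (x + y) = T x + T y"
  by (simp add: bounded_op_def)

lemma bounded_op_scaleC_apply: "bounded_op T \<Longrightarrow> T (scaleC c x) = scaleC c (T x)"
  by (simp add: bounded_op_def)

lemma bounded_op_zero_apply: "bounded_op (T::'h::complex_hilbert \<Rightarrow> 'h) \<Longrightarrow> T 0 = 0"
  using bounded_op_scaleC_apply[of T 0 0] by simp

lemma bounded_op_diff_apply: "bounded_op (T::'h::complex_hilbert \<Rightarrow> 'h) \<Longrightarrow> T (x - y) = T x - T y"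
  using bounded_op_add_apply[of T x "- y"] bounded_op_scaleC_apply[of T "-1" y]
  by (simp add: scaleC_minus_one)

lemma bounded_opI:
  assumes "\<And>x y. T (x + y) = T x + T y" "\<And>c x. T (scaleC c x) = scaleC c (T x)"
    and "\<And>x. hnorm (T x) \<le> K * hnorm x"
  shows "bounded_op (T::'h::complex_hilbert \<Rightarrow> 'h)"
  using assms unfolding bounded_op_def by blast

lemma opnorm_leI:
  assumes "\<And>x. hnorm (T x) \<le> K * hnorm x" "0 \<le> K"
  shows "opnorm (T::'h::complex_hilbert \<Rightarrow> 'h) \<le> K"
  unfolding opnorm_def
proof (rule cSup_least)
  have "hnorm (0::'h) \<le> 1" by simp
  then show "{hnorm (T x) |x. hnorm x \<le> 1} \<noteq> {}" by blast
next
  fix r assume "r \<in> {hnorm (T x) |x. hnorm x \<le> 1}"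
  then obtain x where r: "r = hnorm (T x)" and x: "hnorm x \<le> 1" by auto
  have "K * hnorm x \<le> K * 1" using x by (rule mult_left_mono[OF _ assms(2)])
  then show "r \<le> K" using assms(1)[of x] r by simp
qed

lemma opnorm_lessI:
  assumes "\<And>x. hnorm (T x) \<le> K * hnorm x" "0 \<le> K" "K < e"
  shows "opnorm (T::'h::complex_hilbert \<Rightarrow> 'h) < e"
  using opnorm_leI[OF assms(1,2)] assms(3) by simp

lemma bdd_above_opnorm:
  assumes T: "bounded_op (T::'h::complex_hilbert \<Rightarrow> 'h)"
  shows "bdd_above {hnorm (T x) |x. hnorm x \<le> 1}"
proof -
  obtain K where K: "\<And>x. hnorm (T x) \<le> K * hnorm x" using T by (auto simp: bounded_op_def)
  show ?thesis
  proof (rule bdd_aboveI)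
    fix r assume "r \<in> {hnorm (T x) |x. hnorm x \<le> 1}"
    then obtain x where r: "r = hnorm (T x)" and x: "hnorm x \<le> 1" by auto
    have "K * hnorm x \<le> \<bar>K\<bar> * hnorm x" using hnorm_nonneg[of x] by (simp add: mult_right_mono)
    also have "\<dots> \<le> \<bar>K\<bar> * 1" using x by (rule mult_left_mono) simp
    finally show "r \<le> \<bar>K\<bar>" using K[of x] r by simp
  qed
qed

lemma opnorm_nonneg: "bounded_op (T::'h::complex_hilbert \<Rightarrow> 'h) \<Longrightarrow> 0 \<le> opnorm T"
  using cSup_upper[OF _ bdd_above_opnorm, of "hnorm (T 0)" T] hnorm_nonneg[of "T 0"]
  unfolding opnorm_def by fastforce

lemma hnorm_apply_le_opnorm:
  assumes T: "bounded_op (T::'h::complex_hilbert \<Rightarrow> 'h)"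
  shows "hnorm (T x) \<le> opnorm T * hnorm x"
proof (cases "x = 0")
  case True
  then show ?thesis using bounded_op_zero_apply[OF T] by simp
next
  case False
  then have hp: "hnorm x > 0" using hnorm_nonneg[of x] hnorm_eq_zero[of x] by simp
  define x' where "x' = scaleC (complex_of_real (1 / hnorm x)) x"
  have c: "cmod (complex_of_real (1 / hnorm x)) = 1 / hnorm x" using hp by (simp add: norm_divide)
  have "hnorm x' = 1" using hp unfolding x'_def hnorm_scaleC c by simp
  then have "hnorm (T x') \<le> opnorm T"
    unfolding opnorm_def by (intro cSup_upper bdd_above_opnorm[OF T]) auto
  moreover have "hnorm (T x') = hnorm (T x) / hnorm x"
    unfolding x'_def bounded_op_scaleC_apply[OF T] hnorm_scaleC c by simp
  ultimately show ?thesis using hp by (simp add: divide_le_eq mult.commute)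
qed

lemma hnorm_apply_le:
  "bounded_op (T::'h::complex_hilbert \<Rightarrow> 'h) \<Longrightarrow> opnorm T \<le> M \<Longrightarrow> hnorm (T x) \<le> M * hnorm x"
  using hnorm_apply_le_opnorm[of T x] mult_right_mono[of "opnorm T" M "hnorm x"] hnorm_nonneg[of x]
  by linarith

lemma bounded_op_zero: "bounded_op (op_zero::'h::complex_hilbert \<Rightarrow> 'h)"
  by (rule bounded_opI[where K=0]) (auto simp: op_zero_def)

lemma bounded_op_add:
  assumes S: "bounded_op S" and T: "bounded_op (T::'h::complex_hilbert \<Rightarrow> 'h)"
  shows "bounded_op (op_add S T)"
proof (rule bounded_opI[where K="opnorm S + opnorm T"])
  fix x
  show "hnorm (op_add S T x) \<le> (opnorm S + opnorm T) * hnorm x"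
    using hnorm_triangle[of "S x" "T x"] hnorm_apply_le_opnorm[OF S, of x] hnorm_apply_le_opnorm[OF T, of x]
    by (simp add: op_add_def distrib_right)
qed (simp_all add: op_add_def bounded_op_add_apply[OF S] bounded_op_add_apply[OF T]
       bounded_op_scaleC_apply[OF S] bounded_op_scaleC_apply[OF T] scaleC_add_right)

lemma opnorm_add:
  assumes S: "bounded_op S" and T: "bounded_op (T::'h::complex_hilbert \<Rightarrow> 'h)"
  shows "opnorm (op_add S T) \<le> opnorm S + opnorm T"
proof (rule opnorm_leI)
  fix x
  show "hnorm (op_add S T x) \<le> (opnorm S + opnorm T) * hnorm x"
    using hnorm_triangle[of "S x" "T x"] hnorm_apply_le_opnorm[OF S, of x] hnorm_apply_le_opnorm[OF T, of x]
    by (simp add: op_add_def distrib_right)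
qed (simp add: opnorm_nonneg S T)

lemma bounded_op_scale:
  assumes T: "bounded_op (T::'h::complex_hilbert \<Rightarrow> 'h)"
  shows "bounded_op (op_scale c T)"
proof (rule bounded_opI[where K="cmod c * opnorm T"])
  fix x
  show "hnorm (op_scale c T x) \<le> cmod c * opnorm T * hnorm x"
    using mult_left_mono[OF hnorm_apply_le_opnorm[OF T, of x], of "cmod c"]
    by (simp add: op_scale_def hnorm_scaleC mult.assoc)
qed (simp_all add: op_scale_def bounded_op_add_apply[OF T] bounded_op_scaleC_apply[OF T]
       scaleC_add_right scaleC_scaleC mult.commute)

lemma opnorm_scale:
  assumes T: "bounded_op (T::'h::complex_hilbert \<Rightarrow> 'h)"
  shows "opnorm (op_scale c T) \<le> cmod c * opnorm T"
proof (rule opnorm_leI)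
  fix x
  show "hnorm (op_scale c T x) \<le> cmod c * opnorm T * hnorm x"
    using mult_left_mono[OF hnorm_apply_le_opnorm[OF T, of x], of "cmod c"]
    by (simp add: op_scale_def hnorm_scaleC mult.assoc)
qed (simp add: opnorm_nonneg T)

lemma bounded_op_comp:
  assumes S: "bounded_op S" and T: "bounded_op (T::'h::complex_hilbert \<Rightarrow> 'h)"
  shows "bounded_op (S \<circ> T)"
proof (rule bounded_opI[where K="opnorm S * opnorm T"])
  fix x
  show "hnorm ((S \<circ> T) x) \<le> opnorm S * opnorm T * hnorm x"
    using hnorm_apply_le[OF S, of "opnorm S" "T x"] hnorm_apply_le_opnorm[OF T, of x]
      mult_left_mono[OF _ opnorm_nonneg[OF S]] by (fastforce simp: mult.assoc)
qed (simp_all add: bounded_op_add_apply[OF S] bounded_op_add_apply[OF T]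
       bounded_op_scaleC_apply[OF S] bounded_op_scaleC_apply[OF T])

lemma opnorm_comp:
  assumes S: "bounded_op S" and T: "bounded_op (T::'h::complex_hilbert \<Rightarrow> 'h)"
  shows "opnorm (S \<circ> T) \<le> opnorm S * opnorm T"
proof (rule opnorm_leI)
  fix x
  show "hnorm ((S \<circ> T) x) \<le> opnorm S * opnorm T * hnorm x"
    using hnorm_apply_le[OF S, of "opnorm S" "T x"] hnorm_apply_le_opnorm[OF T, of x]
      mult_left_mono[OF _ opnorm_nonneg[OF S]] by (fastforce simp: mult.assoc)
qed (simp add: opnorm_nonneg S T)

lemma op_diff_eq_op_add_op_scale: "op_diff S T = op_add S (op_scale (-1) (T::'h::complex_hilbert \<Rightarrow> 'h))"
  by (rule ext) (simp add: op_diff_def op_add_def op_scale_def scaleC_minus_one)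

lemma bounded_op_diff:
  "bounded_op S \<Longrightarrow> bounded_op (T::'h::complex_hilbert \<Rightarrow> 'h) \<Longrightarrow> bounded_op (op_diff S T)"
  unfolding op_diff_eq_op_add_op_scale by (intro bounded_op_add bounded_op_scale)

lemma op_diff_op_zero [simp]: "op_diff T op_zero = (T::'h::complex_hilbert \<Rightarrow> 'h)"
  by (rule ext) (simp add: op_diff_def op_zero_def)

lemma op_diff_self [simp]: "op_diff T T = (op_zero::'h::complex_hilbert \<Rightarrow> 'h)"
  by (rule ext) (simp add: op_diff_def op_zero_def)

lemma op_diff_eq_op_zero_iff: "op_diff S T = op_zero \<longleftrightarrow> S = (T::'h::complex_hilbert \<Rightarrow> 'h)"
  by (auto simp: op_diff_def op_zero_def fun_eq_iff)

lemma nonpos_if_le_eps_mult: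
  assumes "\<And>e. e > 0 \<Longrightarrow> (a::real) \<le> e * c"
  shows "a \<le> 0"
proof (rule field_le_epsilon)
  fix d :: real assume d: "d > 0"
  have "a \<le> d / (\<bar>c\<bar> + 1) * c" by (rule assms) (use d in \<open>simp add: add_pos_nonneg\<close>)
  also have "\<dots> \<le> d / (\<bar>c\<bar> + 1) * \<bar>c\<bar>" using d by (intro mult_left_mono) auto
  also have "\<dots> \<le> d" using d by (simp add: field_simps)
  finally show "a \<le> 0 + d" by simp
qed

lemma exists_pos_mult_le: "0 \<le> (M::real) \<Longrightarrow> e > 0 \<Longrightarrow> \<exists>\<delta>>0. M * \<delta> \<le> e"
  by (rule exI[of _ "e / (M + 1)"]) (simp add: field_simps)

lemma ultrafilter_tendsto_bounded:
  fixes w :: "'i \<Rightarrow> real"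
  assumes U: "ultrafilter U" and w: "\<And>i. w i \<in> {lo..hi}"
  shows "\<exists>L. (w \<longlongrightarrow> L) U"
proof -
  define F where "F = filtermap w U"
  have "F \<noteq> bot" using U by (simp add: F_def filtermap_bot_iff ultrafilter_def)
  moreover have "eventually (\<lambda>x. x \<in> {lo..hi}) F" using w by (simp add: F_def eventually_filtermap)
  ultimately obtain L where L: "inf (nhds L) F \<noteq> bot"
    using compact_Icc[of lo hi] unfolding compact_filter by blast
  show ?thesis
  proof (intro exI topological_tendstoI)
    fix S assume S: "open S" "L \<in> S"
    show "eventually (\<lambda>i. w i \<in> S) U"
    proof (rule ccontr)
      assume "\<not> eventually (\<lambda>i. w i \<in> S) U"
      then have "eventually (\<lambda>i. w i \<notin> S) U" using U unfolding ultrafilter_def by blast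
      then have "eventually (\<lambda>x. x \<notin> S) F" by (simp add: F_def eventually_filtermap)
      moreover have "eventually (\<lambda>x. x \<in> S) (nhds L)" using S by (rule eventually_nhds_in_open)
      ultimately have "eventually (\<lambda>x. False) (inf (nhds L) F)"
        unfolding eventually_inf by blast
      then show False using L by (simp add: trivial_limit_def[symmetric])
    qed
  qed
qed

definition lincomb :: "(complex \<times> ('h::complex_hilbert \<Rightarrow> 'h) \<times> 'h) list \<Rightarrow> 'h" where
  "lincomb ps = sum_list (map (\<lambda>(c, a, \<eta>). scaleC c (a \<eta>)) ps)"

lemma hnorm_apply_lincomb_le:
  assumes R: "bounded_op (R::'h::complex_hilbert \<Rightarrow> 'h)"
  shows "hnorm (R (lincomb ps)) \<le> (\<Sum>(c, a, \<eta>)\<leftarrow>ps. cmod c * hnorm (R (a \<eta>)))"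
proof (induction ps)
  case Nil
  then show ?case by (simp add: lincomb_def bounded_op_zero_apply[OF R])
next
  case (Cons p ps)
  obtain c a \<eta> where p: "p = (c, a, \<eta>)" by (cases p) auto
  have "R (lincomb (p # ps)) = scaleC c (R (a \<eta>)) + R (lincomb ps)"
    by (simp add: lincomb_def p bounded_op_add_apply[OF R] bounded_op_scaleC_apply[OF R])
  then show ?case
    using hnorm_triangle[of "scaleC c (R (a \<eta>))" "R (lincomb ps)"] Cons.IH
    by (simp add: p hnorm_scaleC)
qed

locale nondegenerate_cstar_algebra =
  fixes A :: "('h::complex_hilbert \<Rightarrow> 'h) set"
  assumes cstar_subalgebra: "cstar_subalgebra A" and nondegenerate: "nondegenerate A"
begin

lemma A_bounded: "a \<in> A \<Longrightarrow> bounded_op a"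
  and A_zero: "op_zero \<in> A"
  and A_add: "a \<in> A \<Longrightarrow> b \<in> A \<Longrightarrow> op_add a b \<in> A"
  and A_scale: "a \<in> A \<Longrightarrow> op_scale c a \<in> A"
  and A_comp: "a \<in> A \<Longrightarrow> b \<in> A \<Longrightarrow> a \<circ> b \<in> A"
  using cstar_subalgebra by (simp_all add: cstar_subalgebra_def)

lemma A_closed: "bounded_op T \<Longrightarrow> (\<And>e. e > 0 \<Longrightarrow> \<exists>a\<in>A. opnorm (op_diff T a) < e) \<Longrightarrow> T \<in> A"
  using cstar_subalgebra unfolding cstar_subalgebra_def by blast

lemma lincomb_dense:
  assumes "e > 0"
  obtains ps where "\<forall>(c, a, \<eta>) \<in> set ps. a \<in> A" "hnorm (\<xi> - lincomb ps) < e"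
  using nondegenerate assms unfolding nondegenerate_def lincomb_def by blast

lemma bounded_op_eq_zero_if_annihilates:
  assumes R: "bounded_op R" and annihilates: "\<And>a v. a \<in> A \<Longrightarrow> R (a v) = 0"
  shows "R = op_zero"
proof
  fix \<xi>
  have "hnorm (R \<xi>) \<le> 0"
  proof (rule nonpos_if_le_eps_mult)
    fix e :: real assume e: "e > 0"
    obtain ps where ps: "\<forall>(c, a, \<eta>) \<in> set ps. a \<in> A" and close: "hnorm (\<xi> - lincomb ps) < e"
      using lincomb_dense[OF e] .
    have "(\<Sum>(c, a, \<eta>)\<leftarrow>ps. cmod c * hnorm (R (a \<eta>))) = 0"
      using ps by (induction ps) (auto simp: annihilates)
    then have "R (lincomb ps) = 0"
      using hnorm_apply_lincomb_le[OF R, of ps] hnorm_nonneg[of "R (lincomb ps)"] hnorm_eq_zero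
      by (metis order_antisym)
    then have "hnorm (R \<xi>) = hnorm (R (\<xi> - lincomb ps))" by (simp add: bounded_op_diff_apply[OF R])
    also have "\<dots> \<le> opnorm R * hnorm (\<xi> - lincomb ps)" by (rule hnorm_apply_le_opnorm[OF R])
    also have "\<dots> \<le> opnorm R * e" using close opnorm_nonneg[OF R] by (intro mult_left_mono) auto
    finally show "hnorm (R \<xi>) \<le> e * opnorm R" by (simp add: mult.commute)
  qed
  then show "R \<xi> = op_zero \<xi>"
    using hnorm_nonneg[of "R \<xi>"] hnorm_eq_zero[of "R \<xi>"] by (simp add: op_zero_def)
qed

end

locale strict_ultrapower = nondegenerate_cstar_algebra A
  for A :: "('h::complex_hilbert \<Rightarrow> 'h) set" +
  fixes U :: "'i filter"
  assumes ultrafilter: "ultrafilter U"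
begin

lemma U_proper: "U \<noteq> bot"
  using ultrafilter by (simp add: ultrafilter_def)

definition strict_lim :: "('i \<Rightarrow> 'h \<Rightarrow> 'h) \<Rightarrow> ('h \<Rightarrow> 'h) \<Rightarrow> bool" where
  "strict_lim f T \<longleftrightarrow> (\<forall>x\<in>A. \<forall>e>0. eventually (\<lambda>i. \<forall>v.
     hnorm (f i (x v) - T (x v)) \<le> e * hnorm v \<and> hnorm (x (f i v) - x (T v)) \<le> e * hnorm v) U)"

lemma strict_limD:
  "strict_lim f T \<Longrightarrow> x \<in> A \<Longrightarrow> e > 0 \<Longrightarrow> eventually (\<lambda>i. \<forall>v.
     hnorm (f i (x v) - T (x v)) \<le> e * hnorm v \<and> hnorm (x (f i v) - x (T v)) \<le> e * hnorm v) U"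
  unfolding strict_lim_def by blast

lemma strict_conv_iff_strict_lim:
  assumes f: "\<And>i. bounded_op (f i)" and T: "bounded_op T"
  shows "strict_conv U A f T \<longleftrightarrow> strict_lim f T"
proof
  assume conv: "strict_conv U A f T"
  show "strict_lim f T" unfolding strict_lim_def
  proof (intro ballI allI impI)
    fix x e assume x: "x \<in> A" and e: "(e::real) > 0"
    have x_bounded: "bounded_op x" using x by (rule A_bounded)
    have "eventually (\<lambda>i. opnorm (op_diff (f i \<circ> x) (T \<circ> x)) < e
                         \<and> opnorm (op_diff (x \<circ> f i) (x \<circ> T)) < e) U"
      using conv x e unfolding strict_conv_def by blast
    then show "eventually (\<lambda>i. \<forall>v. hnorm (f i (x v) - T (x v)) \<le> e * hnorm v
                                 \<and> hnorm (x (f i v) - x (T v)) \<le> e * hnorm v) U"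
    proof eventually_elim
      case (elim i)
      have "bounded_op (op_diff (f i \<circ> x) (T \<circ> x))" "bounded_op (op_diff (x \<circ> f i) (x \<circ> T))"
        by (intro bounded_op_diff bounded_op_comp f T x_bounded)+
      with elim show ?case
        using hnorm_apply_le[of "op_diff (f i \<circ> x) (T \<circ> x)" e]
          hnorm_apply_le[of "op_diff (x \<circ> f i) (x \<circ> T)" e]
        by (simp add: op_diff_def)
    qed
  qed
next
  assume lim: "strict_lim f T"
  show "strict_conv U A f T" unfolding strict_conv_def
  proof (intro ballI allI impI)
    fix x e assume x: "x \<in> A" and e: "(e::real) > 0"
    show "eventually (\<lambda>i. opnorm (op_diff (f i \<circ> x) (T \<circ> x)) < e
                         \<and> opnorm (op_diff (x \<circ> f i) (x \<circ> T)) < e) U"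
      using strict_limD[OF lim x half_gt_zero[OF e]]
      by eventually_elim (use e in \<open>auto intro!: opnorm_lessI[where K="e/2"] simp: op_diff_def\<close>)
  qed
qed

lemma strict_lim_const: "strict_lim (\<lambda>i. T) T"
  unfolding strict_lim_def by (auto simp: hnorm_nonneg)

lemma strict_lim_add:
  assumes f: "strict_lim f T" and g: "strict_lim g S"
  shows "strict_lim (\<lambda>i. op_add (f i) (g i)) (op_add T S)"
  unfolding strict_lim_def
proof (intro ballI allI impI)
  fix x e assume x: "x \<in> A" and e: "(e::real) > 0"
  have x_bounded: "bounded_op x" using x by (rule A_bounded)
  show "eventually (\<lambda>i. \<forall>v. hnorm (op_add (f i) (g i) (x v) - op_add T S (x v)) \<le> e * hnorm v
      \<and> hnorm (x (op_add (f i) (g i) v) - x (op_add T S v)) \<le> e * hnorm v) U"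
    using strict_limD[OF f x half_gt_zero[OF e]] strict_limD[OF g x half_gt_zero[OF e]]
  proof eventually_elim
    case (elim i)
    show ?case
    proof
      fix v
      have f_v: "hnorm (f i (x v) - T (x v)) \<le> e/2 * hnorm v" "hnorm (x (f i v) - x (T v)) \<le> e/2 * hnorm v"
        and g_v: "hnorm (g i (x v) - S (x v)) \<le> e/2 * hnorm v" "hnorm (x (g i v) - x (S v)) \<le> e/2 * hnorm v"
        using elim by blast+
      have left: "op_add (f i) (g i) (x v) - op_add T S (x v) = (f i (x v) - T (x v)) + (g i (x v) - S (x v))"
        and right: "x (op_add (f i) (g i) v) - x (op_add T S v) = (x (f i v) - x (T v)) + (x (g i v) - x (S v))"
        by (simp_all add: op_add_def bounded_op_add_apply[OF x_bounded] algebra_simps)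
      have "e/2 * hnorm v + e/2 * hnorm v = e * hnorm v" by simp
      then show "hnorm (op_add (f i) (g i) (x v) - op_add T S (x v)) \<le> e * hnorm v
          \<and> hnorm (x (op_add (f i) (g i) v) - x (op_add T S v)) \<le> e * hnorm v"
        unfolding left right using f_v g_v hnorm_triangle[of "f i (x v) - T (x v)" "g i (x v) - S (x v)"]
          hnorm_triangle[of "x (f i v) - x (T v)" "x (g i v) - x (S v)"]
        by linarith
    qed
  qed
qed

lemma strict_lim_scale:
  assumes f: "strict_lim f T"
  shows "strict_lim (\<lambda>i. op_scale c (f i)) (op_scale c T)"
  unfolding strict_lim_def
proof (intro ballI allI impI)
  fix x e assume x: "x \<in> A" and e: "(e::real) > 0"
  have x_bounded: "bounded_op x" using x by (rule A_bounded)
  obtain \<delta> where \<delta>: "\<delta> > 0" and c\<delta>: "cmod c * \<delta> \<le> e"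
    using exists_pos_mult_le[OF norm_ge_zero e] by blast
  have scale: "cmod c * r \<le> e * hnorm v" if "r \<le> \<delta> * hnorm v" for r and v :: 'h
    using mult_left_mono[OF that norm_ge_zero[of c]] mult_right_mono[OF c\<delta> hnorm_nonneg[of v]]
    by (simp add: mult.assoc)
  show "eventually (\<lambda>i. \<forall>v. hnorm (op_scale c (f i) (x v) - op_scale c T (x v)) \<le> e * hnorm v
      \<and> hnorm (x (op_scale c (f i) v) - x (op_scale c T v)) \<le> e * hnorm v) U"
    using strict_limD[OF f x \<delta>]
    by eventually_elim (simp add: op_scale_def bounded_op_scaleC_apply[OF x_bounded]
        scaleC_diff_right[symmetric] hnorm_scaleC scale)
qed

lemma strict_lim_diff:
  "strict_lim f T \<Longrightarrow> strict_lim g S \<Longrightarrow> strict_lim (\<lambda>i. op_diff (f i) (g i)) (op_diff T S)"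
  unfolding op_diff_eq_op_add_op_scale by (intro strict_lim_add strict_lim_scale)

lemma strict_lim_unique:
  assumes f: "strict_lim f T" and g: "strict_lim f S" and T: "bounded_op T" and S: "bounded_op S"
  shows "T = S"
proof -
  have "T (x v) = S (x v)" if x: "x \<in> A" for x v
  proof -
    have "hnorm (T (x v) - S (x v)) \<le> 0"
    proof (rule nonpos_if_le_eps_mult)
      fix e :: real assume e: "e > 0"
      obtain i where "hnorm (f i (x v) - T (x v)) \<le> e * hnorm v" "hnorm (f i (x v) - S (x v)) \<le> e * hnorm v"
        using eventually_happens'[OF U_proper eventually_conj[OF strict_limD[OF f x e] strict_limD[OF g x e]]]
        by blast
      then show "hnorm (T (x v) - S (x v)) \<le> e * (2 * hnorm v)"
        using hnorm_triangle_diff[of "T (x v)" "S (x v)" "f i (x v)"]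
          hnorm_diff_commute[of "T (x v)" "f i (x v)"] by simp
    qed
    then have "hnorm (T (x v) - S (x v)) = 0" by (rule antisym[OF _ hnorm_nonneg])
    then show ?thesis by (simp add: hnorm_eq_zero)
  qed
  then have "op_diff T S = op_zero"
    by (intro bounded_op_eq_zero_if_annihilates bounded_op_diff T S) (simp add: op_diff_def)
  then show ?thesis by (simp add: op_diff_eq_op_zero_iff)
qed

lemma strict_lim_multiplier:
  assumes f: "strict_lim f T" and fA: "\<And>i. f i \<in> A" and T: "bounded_op T" and x: "x \<in> A"
  shows "T \<circ> x \<in> A" and "x \<circ> T \<in> A"
proof -
  have x_bounded: "bounded_op x" using x by (rule A_bounded)
  have close: "\<exists>i. opnorm (op_diff (T \<circ> x) (f i \<circ> x)) < e \<and> opnorm (op_diff (x \<circ> T) (x \<circ> f i)) < e"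
    if e: "e > 0" for e
  proof -
    obtain i where "\<forall>v. hnorm (f i (x v) - T (x v)) \<le> e/2 * hnorm v \<and> hnorm (x (f i v) - x (T v)) \<le> e/2 * hnorm v"
      using eventually_happens'[OF U_proper strict_limD[OF f x half_gt_zero[OF e]]] by blast
    then show ?thesis
      using e by (auto intro!: exI[of _ i] opnorm_lessI[where K="e/2"] simp: op_diff_def hnorm_diff_commute)
  qed
  show "T \<circ> x \<in> A"
    using close A_comp[OF fA x] by (intro A_closed bounded_op_comp T x_bounded) blast
  show "x \<circ> T \<in> A"
    using close A_comp[OF x fA] by (intro A_closed bounded_op_comp T x_bounded) blast
qed

lemma strict_lim_comp:
  assumes f: "strict_lim f T" and g: "strict_lim g S" and T: "bounded_op T" and S: "bounded_op S"
    and fA: "\<And>i. f i \<in> A" and gA: "\<And>i. g i \<in> A"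
    and f_bound: "\<And>i. opnorm (f i) \<le> M" and g_bound: "\<And>i. opnorm (g i) \<le> N"
  shows "strict_lim (\<lambda>i. f i \<circ> g i) (T \<circ> S)"
  unfolding strict_lim_def
proof (intro ballI allI impI)
  fix x e assume x: "x \<in> A" and e: "(e::real) > 0"
  \<comment> \<open>S \<circ> x and x \<circ> T lie in A, so they may serve as test operators for f and g.\<close>
  have Sx: "S \<circ> x \<in> A" and xT: "x \<circ> T \<in> A"
    by (rule strict_lim_multiplier[OF g gA S x] strict_lim_multiplier[OF f fA T x])+
  have "0 \<le> M" "0 \<le> N"
    using f_bound g_bound opnorm_nonneg[OF A_bounded[OF fA]] opnorm_nonneg[OF A_bounded[OF gA]]
    by (meson order_trans)+
  then obtain \<delta> \<delta>' where \<delta>: "\<delta> > 0" "M * \<delta> \<le> e/2" and \<delta>': "\<delta>' > 0" "N * \<delta>' \<le> e/2"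
    using exists_pos_mult_le half_gt_zero[OF e] by meson
  show "eventually (\<lambda>i. \<forall>v. hnorm ((f i \<circ> g i) (x v) - (T \<circ> S) (x v)) \<le> e * hnorm v
      \<and> hnorm (x ((f i \<circ> g i) v) - x ((T \<circ> S) v)) \<le> e * hnorm v) U"
    using strict_limD[OF g x \<delta>(1)] strict_limD[OF f Sx half_gt_zero[OF e]]
      strict_limD[OF f x \<delta>'(1)] strict_limD[OF g xT half_gt_zero[OF e]]
  proof eventually_elim
    case (elim i)
    have fb: "bounded_op (f i)" and gb: "bounded_op (g i)" using fA gA by (simp_all add: A_bounded)
    show ?case
    proof
      fix v
      have "hnorm (f i (g i (x v)) - T (S (x v)))
          \<le> hnorm (f i (g i (x v) - S (x v))) + hnorm (f i (S (x v)) - T (S (x v)))"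
        using hnorm_triangle_diff[of "f i (g i (x v))" "T (S (x v))" "f i (S (x v))"]
        by (simp add: bounded_op_diff_apply[OF fb])
      also have "hnorm (f i (g i (x v) - S (x v))) \<le> M * (\<delta> * hnorm v)"
        using hnorm_apply_le[OF fb f_bound] elim(1) \<open>0 \<le> M\<close> by (meson mult_left_mono order_trans)
      also have "M * (\<delta> * hnorm v) \<le> e/2 * hnorm v"
        using mult_right_mono[OF \<delta>(2) hnorm_nonneg[of v]] by (simp add: mult.assoc)
      finally have left: "hnorm (f i (g i (x v)) - T (S (x v))) \<le> e * hnorm v"
        using conjunct1[OF spec[OF elim(2), of v]] by simp
      have "hnorm (x (f i (g i v)) - x (T (S v)))
          \<le> hnorm (x (f i (g i v)) - x (T (g i v))) + hnorm (x (T (g i v)) - x (T (S v)))"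
        by (rule hnorm_triangle_diff)
      also have "hnorm (x (f i (g i v)) - x (T (g i v))) \<le> \<delta>' * (N * hnorm v)"
        using elim(3) hnorm_apply_le[OF gb g_bound, of v] \<delta>'(1) by (meson mult_left_mono less_imp_le order_trans)
      also have "\<delta>' * (N * hnorm v) \<le> e/2 * hnorm v"
        using mult_right_mono[OF \<delta>'(2) hnorm_nonneg[of v]] by (simp add: ac_simps)
      finally have right: "hnorm (x (f i (g i v)) - x (T (S v))) \<le> e * hnorm v"
        using conjunct2[OF spec[OF elim(4), of v]] by simp
      show "hnorm ((f i \<circ> g i) (x v) - (T \<circ> S) (x v)) \<le> e * hnorm v
          \<and> hnorm (x ((f i \<circ> g i) v) - x ((T \<circ> S) v)) \<le> e * hnorm v"
        using left right by simp
    qed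
  qed
qed

lemma eventually_strict_lim_lincomb:
  assumes c: "strict_lim c S" and cA: "\<And>i. c i \<in> A" and S: "bounded_op S"
    and ps: "\<forall>(k, a, \<eta>) \<in> set ps. a \<in> A" and \<delta>: "\<delta> > 0"
  shows "eventually (\<lambda>i. hnorm (c i (lincomb ps) - S (lincomb ps)) \<le> \<delta>) U"
proof -
  define C where "C = (\<Sum>(k, a, \<eta>)\<leftarrow>ps. cmod k * hnorm \<eta>)"
  have "0 \<le> C" unfolding C_def by (rule sum_list_nonneg) (auto simp: hnorm_nonneg)
  then obtain \<epsilon> where \<epsilon>: "\<epsilon> > 0" "C * \<epsilon> \<le> \<delta>" using exists_pos_mult_le \<delta> by blast
  have "\<forall>(k, a, \<eta>) \<in> set ps. eventually (\<lambda>i. hnorm (c i (a \<eta>) - S (a \<eta>)) \<le> \<epsilon> * hnorm \<eta>) U"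
    using ps by (auto elim!: eventually_mono[OF strict_limD[OF c _ \<epsilon>(1)]])
  then have "eventually (\<lambda>i. \<forall>(k, a, \<eta>) \<in> set ps. hnorm (c i (a \<eta>) - S (a \<eta>)) \<le> \<epsilon> * hnorm \<eta>) U"
    by (intro eventually_ball_finite) auto
  then show ?thesis
  proof eventually_elim
    case (elim i)
    have R: "bounded_op (op_diff (c i) S)" using A_bounded[OF cA] S by (rule bounded_op_diff)
    have "hnorm (c i (lincomb ps) - S (lincomb ps)) \<le> (\<Sum>(k, a, \<eta>)\<leftarrow>ps. cmod k * hnorm (c i (a \<eta>) - S (a \<eta>)))"
      using hnorm_apply_lincomb_le[OF R] by (simp add: op_diff_def)
    also have "\<dots> \<le> (\<Sum>(k, a, \<eta>)\<leftarrow>ps. cmod k * (\<epsilon> * hnorm \<eta>))"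
      by (rule sum_list_mono) (use elim in \<open>auto intro!: mult_left_mono\<close>)
    also have "\<dots> = C * \<epsilon>" unfolding C_def by (induction ps) (auto simp: algebra_simps)
    finally show ?case using \<epsilon>(2) by simp
  qed
qed

lemma hnorm_strict_lim_apply_le:
  assumes c: "strict_lim c S" and cA: "\<And>i. c i \<in> A" and S: "bounded_op S"
    and K: "0 \<le> K" "eventually (\<lambda>i. opnorm (c i) \<le> K) U" and \<epsilon>: "\<epsilon> > 0"
  shows "hnorm (S \<xi>) \<le> K * (hnorm \<xi> + \<epsilon>) + (1 + opnorm S) * \<epsilon>"
proof -
  obtain ps where ps: "\<forall>(k, a, \<eta>) \<in> set ps. a \<in> A" and close: "hnorm (\<xi> - lincomb ps) < \<epsilon>"
    using lincomb_dense[OF \<epsilon>] .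
  define s where "s = lincomb ps"
  obtain i where i: "hnorm (c i s - S s) \<le> \<epsilon>" "opnorm (c i) \<le> K"
    using eventually_happens'[OF U_proper eventually_conj[OF eventually_strict_lim_lincomb[OF c cA S ps \<epsilon>] K(2)]]
    unfolding s_def by blast
  have "hnorm (S \<xi>) \<le> hnorm (S s) + hnorm (S (\<xi> - s))"
    using hnorm_triangle[of "S s" "S (\<xi> - s)"] by (simp add: bounded_op_diff_apply[OF S])
  also have "hnorm (S s) \<le> hnorm (c i s) + \<epsilon>"
    using hnorm_diff_le[of "c i s" "c i s - S s"] i(1) by simp
  also have "hnorm (c i s) \<le> K * hnorm s"
    by (rule hnorm_apply_le[OF A_bounded[OF cA] i(2)])
  also have "\<dots> \<le> K * (hnorm \<xi> + \<epsilon>)"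
    using hnorm_diff_le[of \<xi> "\<xi> - s"] close K(1) by (intro mult_left_mono) (auto simp: s_def)
  also have "hnorm (S (\<xi> - s)) \<le> opnorm S * \<epsilon>"
    using hnorm_apply_le_opnorm[OF S, of "\<xi> - s"] mult_left_mono[OF _ opnorm_nonneg[OF S], of "hnorm (\<xi> - s)" \<epsilon>]
      close by (simp add: s_def)
  finally show ?thesis by (simp add: algebra_simps)
qed

lemma opnorm_le_strict_lim:
  assumes c: "strict_lim c S" and cA: "\<And>i. c i \<in> A" and S: "bounded_op S"
    and L: "((\<lambda>i. opnorm (c i)) \<longlongrightarrow> L) U"
  shows "opnorm S \<le> L"
proof -
  have L0: "0 \<le> L"
    by (rule tendsto_lowerbound[OF L])
      (use U_proper opnorm_nonneg A_bounded[OF cA] in \<open>auto intro: always_eventually\<close>)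
  have approx: "hnorm (S \<xi>) \<le> (L + \<epsilon>) * (hnorm \<xi> + \<epsilon>) + (1 + opnorm S) * \<epsilon>" if "\<epsilon> > 0" for \<xi> \<epsilon>
    using that L0 order_tendstoD(2)[OF L, of "L + \<epsilon>"]
    by (intro hnorm_strict_lim_apply_le[OF c cA S]) (auto elim!: eventually_mono)
  have "hnorm (S \<xi>) \<le> L * hnorm \<xi>" for \<xi>
  proof (rule tendsto_le[OF trivial_limit_at_right_real _ tendsto_const])
    have "((\<lambda>\<epsilon>. (L + \<epsilon>) * (hnorm \<xi> + \<epsilon>) + (1 + opnorm S) * \<epsilon>)
        \<longlongrightarrow> (L + 0) * (hnorm \<xi> + 0) + (1 + opnorm S) * 0) (at_right 0)"
      by (intro tendsto_intros)
    then show "((\<lambda>\<epsilon>. (L + \<epsilon>) * (hnorm \<xi> + \<epsilon>) + (1 + opnorm S) * \<epsilon>) \<longlongrightarrow> L * hnorm \<xi>) (at_right 0)"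
      by simp
    show "\<forall>\<^sub>F \<epsilon> in at_right 0. hnorm (S \<xi>) \<le> (L + \<epsilon>) * (hnorm \<xi> + \<epsilon>) + (1 + opnorm S) * \<epsilon>"
      using eventually_at_right_less by (rule eventually_mono) (rule approx)
  qed
  then show ?thesis using L0 by (rule opnorm_leI)
qed

lemma sfam_iff:
  "f \<in> sfam U A \<longleftrightarrow> (\<forall>i. f i \<in> A) \<and> (\<exists>M. \<forall>i. opnorm (f i) \<le> M) \<and> (\<exists>T. bounded_op T \<and> strict_lim f T)"
proof -
  have "(\<forall>i. f i \<in> A) \<Longrightarrow> bounded_op T \<Longrightarrow> strict_conv U A f T \<longleftrightarrow> strict_lim f T" for T
    by (rule strict_conv_iff_strict_lim) (auto intro: A_bounded)
  then show ?thesis unfolding sfam_def bdd_family_def by auto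
qed

lemma sfamI:
  "(\<And>i. f i \<in> A) \<Longrightarrow> (\<And>i. opnorm (f i) \<le> M) \<Longrightarrow> bounded_op T \<Longrightarrow> strict_lim f T \<Longrightarrow> f \<in> sfam U A"
  unfolding sfam_iff by blast

lemma sfam_in_A: "f \<in> sfam U A \<Longrightarrow> f i \<in> A"
  unfolding sfam_iff by blast

lemma sfam_bounded:
  assumes "f \<in> sfam U A"
  obtains M where "0 \<le> M" "\<And>i. opnorm (f i) \<le> M"
proof -
  obtain M where "\<And>i. opnorm (f i) \<le> M" using assms unfolding sfam_iff by blast
  moreover have "0 \<le> opnorm (f i)" for i by (rule opnorm_nonneg[OF A_bounded[OF sfam_in_A[OF assms]]])
  ultimately show ?thesis using that by (meson order_trans)
qed

lemma sfam_strict_lim: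
  assumes "f \<in> sfam U A"
  obtains T where "bounded_op T" "strict_lim f T"
  using assms unfolding sfam_iff by blast

lemma jfam_iff: "f \<in> jfam U A \<longleftrightarrow> f \<in> sfam U A \<and> strict_lim f op_zero"
proof -
  have "f \<in> sfam U A \<Longrightarrow> strict_conv U A f op_zero \<longleftrightarrow> strict_lim f op_zero"
    by (rule strict_conv_iff_strict_lim) (auto intro: A_bounded sfam_in_A bounded_op_zero)
  then show ?thesis unfolding jfam_def by auto
qed

lemma sfam_const: "a \<in> A \<Longrightarrow> (\<lambda>i. a) \<in> sfam U A"
  by (rule sfamI[where M="opnorm a" and T=a]) (auto intro: A_bounded strict_lim_const)

lemma sfam_add:
  assumes f: "f \<in> sfam U A" and g: "g \<in> sfam U A"
  shows "(\<lambda>i. op_add (f i) (g i)) \<in> sfam U A"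
proof -
  obtain M N where M: "\<And>i. opnorm (f i) \<le> M" and N: "\<And>i. opnorm (g i) \<le> N"
    using sfam_bounded[OF f] sfam_bounded[OF g] by metis
  obtain T S where "bounded_op T" "strict_lim f T" "bounded_op S" "strict_lim g S"
    using sfam_strict_lim[OF f] sfam_strict_lim[OF g] by metis
  then show ?thesis
  proof (intro sfamI[where M="M + N" and T="op_add T S"] bounded_op_add strict_lim_add)
    fix i
    show "op_add (f i) (g i) \<in> A" by (intro A_add sfam_in_A f g)
    have "opnorm (op_add (f i) (g i)) \<le> opnorm (f i) + opnorm (g i)"
      by (intro opnorm_add A_bounded sfam_in_A f g)
    then show "opnorm (op_add (f i) (g i)) \<le> M + N" using M[of i] N[of i] by linarith
  qed
qed

lemma sfam_scale:
  assumes f: "f \<in> sfam U A"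
  shows "(\<lambda>i. op_scale c (f i)) \<in> sfam U A"
proof -
  obtain M where M: "\<And>i. opnorm (f i) \<le> M" using sfam_bounded[OF f] by metis
  obtain T where "bounded_op T" "strict_lim f T" using sfam_strict_lim[OF f] by metis
  then show ?thesis
  proof (intro sfamI[where M="cmod c * M" and T="op_scale c T"] bounded_op_scale strict_lim_scale)
    fix i
    show "op_scale c (f i) \<in> A" by (intro A_scale sfam_in_A f)
    have "opnorm (op_scale c (f i)) \<le> cmod c * opnorm (f i)"
      by (intro opnorm_scale A_bounded sfam_in_A f)
    also have "\<dots> \<le> cmod c * M" using M by (rule mult_left_mono) simp
    finally show "opnorm (op_scale c (f i)) \<le> cmod c * M" .
  qed
qed

lemma sfam_diff: "f \<in> sfam U A \<Longrightarrow> g \<in> sfam U A \<Longrightarrow> (\<lambda>i. op_diff (f i) (g i)) \<in> sfam U A"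
  unfolding op_diff_eq_op_add_op_scale by (intro sfam_add sfam_scale)

lemma sfam_comp:
  assumes f: "f \<in> sfam U A" and g: "g \<in> sfam U A"
  shows "(\<lambda>i. f i \<circ> g i) \<in> sfam U A"
proof -
  obtain M N where M: "0 \<le> M" "\<And>i. opnorm (f i) \<le> M" and N: "\<And>i. opnorm (g i) \<le> N"
    using sfam_bounded[OF f] sfam_bounded[OF g] by metis
  obtain T S where T: "bounded_op T" "strict_lim f T" and S: "bounded_op S" "strict_lim g S"
    using sfam_strict_lim[OF f] sfam_strict_lim[OF g] by metis
  show ?thesis
  proof (rule sfamI[where M="M * N" and T="T \<circ> S"])
    fix i
    show "f i \<circ> g i \<in> A" by (intro A_comp sfam_in_A f g)
    have "opnorm (f i \<circ> g i) \<le> opnorm (f i) * opnorm (g i)"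
      by (intro opnorm_comp A_bounded sfam_in_A f g)
    also have "\<dots> \<le> M * N"
      using M N opnorm_nonneg[OF A_bounded[OF sfam_in_A[OF g]]] by (intro mult_mono) auto
    finally show "opnorm (f i \<circ> g i) \<le> M * N" .
  qed (use T S in \<open>auto intro: bounded_op_comp strict_lim_comp sfam_in_A f g M N\<close>)
qed

definition strict_class :: "('h \<Rightarrow> 'h) \<Rightarrow> ('i \<Rightarrow> 'h \<Rightarrow> 'h) set" where
  "strict_class T = {f \<in> sfam U A. strict_lim f T}"

definition strict_limits :: "('h \<Rightarrow> 'h) set" where
  "strict_limits = {T. bounded_op T \<and> strict_class T \<noteq> {}}"

lemma strict_limitsI: "f \<in> sfam U A \<Longrightarrow> strict_lim f T \<Longrightarrow> bounded_op T \<Longrightarrow> T \<in> strict_limits"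
  unfolding strict_limits_def strict_class_def by blast

lemma strict_limits_bounded: "T \<in> strict_limits \<Longrightarrow> bounded_op T"
  unfolding strict_limits_def by blast

lemma qcls_eq_strict_class:
  assumes f: "f \<in> sfam U A" "strict_lim f T" and T: "bounded_op T"
  shows "qcls U A f = strict_class T"
proof (intro set_eqI iffI)
  fix h assume "h \<in> qcls U A f"
  then have h: "h \<in> sfam U A" and fh: "strict_lim (\<lambda>i. op_diff (f i) (h i)) op_zero"
    unfolding qcls_def jfam_iff by auto
  obtain S where S: "bounded_op S" "strict_lim h S" using sfam_strict_lim[OF h] by metis
  have "op_diff T S = op_zero"
    using strict_lim_unique[OF strict_lim_diff[OF f(2) S(2)] fh] bounded_op_diff[OF T S(1)] bounded_op_zero
    by blast
  then show "h \<in> strict_class T" using h S by (simp add: strict_class_def op_diff_eq_op_zero_iff)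
next
  fix h assume "h \<in> strict_class T"
  then have h: "h \<in> sfam U A" "strict_lim h T" unfolding strict_class_def by auto
  have "strict_lim (\<lambda>i. op_diff (f i) (h i)) op_zero"
    using strict_lim_diff[OF f(2) h(2)] by simp
  then show "h \<in> qcls U A f" using h sfam_diff[OF f(1) h(1)] unfolding qcls_def jfam_iff by simp
qed

lemma quot_eq_strict_class_image: "quot U A = strict_class ` strict_limits"
proof (intro set_eqI iffI)
  fix X assume "X \<in> quot U A"
  then obtain f where f: "f \<in> sfam U A" and X: "X = qcls U A f" unfolding quot_def by blast
  obtain T where "bounded_op T" "strict_lim f T" using sfam_strict_lim[OF f] by metis
  then show "X \<in> strict_class ` strict_limits"
    using X f qcls_eq_strict_class strict_limitsI by blast
next
  fix X assume "X \<in> strict_class ` strict_limits"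
  then obtain T f where T: "bounded_op T" and f: "f \<in> strict_class T" and X: "X = strict_class T"
    unfolding strict_limits_def by blast
  then show "X \<in> quot U A"
    using qcls_eq_strict_class[of f T] unfolding quot_def strict_class_def by blast
qed

lemma strict_class_inj:
  assumes "T \<in> strict_limits" "bounded_op S" "strict_class T = strict_class S"
  shows "T = S"
  using assms strict_lim_unique unfolding strict_limits_def strict_class_def by blast

lemma strict_class_const: "a \<in> A \<Longrightarrow> (\<lambda>i. a) \<in> strict_class a"
  unfolding strict_class_def by (auto intro: sfam_const strict_lim_const)

lemma A_subset_strict_limits: "A \<subseteq> strict_limits"
  using strict_class_const A_bounded unfolding strict_limits_def by blast

lemma const_embed_eq_strict_class: "a \<in> A \<Longrightarrow> const_embed U A a = strict_class a"
  unfolding const_embed_def by (intro qcls_eq_strict_class sfam_const strict_lim_const A_bounded)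

lemma qzero_eq_strict_class: "qzero U A = strict_class op_zero"
  using const_embed_eq_strict_class[OF A_zero] unfolding qzero_def const_embed_def .

lemma strict_limits_multiplier:
  assumes "T \<in> strict_limits" "a \<in> A"
  shows "T \<circ> a \<in> A" "a \<circ> T \<in> A"
  using assms strict_lim_multiplier sfam_in_A unfolding strict_limits_def strict_class_def by blast+

lemma qrep_strict_class:
  assumes "T \<in> strict_limits"
  shows "qrep (strict_class T) \<in> sfam U A" "strict_lim (qrep (strict_class T)) T"
  using assms someI_ex[of "\<lambda>f. f \<in> strict_class T"]
  unfolding strict_limits_def qrep_def strict_class_def by auto

lemma qadd_strict_class:
  assumes "T \<in> strict_limits" "S \<in> strict_limits"
  shows "qadd U A (strict_class T) (strict_class S) = strict_class (op_add T S)"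
  unfolding qadd_def using assms
  by (intro qcls_eq_strict_class sfam_add strict_lim_add qrep_strict_class bounded_op_add strict_limits_bounded)

lemma qscale_strict_class:
  assumes "T \<in> strict_limits"
  shows "qscale U A c (strict_class T) = strict_class (op_scale c T)"
  unfolding qscale_def using assms
  by (intro qcls_eq_strict_class sfam_scale strict_lim_scale qrep_strict_class bounded_op_scale strict_limits_bounded)

lemma qdiff_strict_class:
  assumes "T \<in> strict_limits" "S \<in> strict_limits"
  shows "qdiff U A (strict_class T) (strict_class S) = strict_class (op_diff T S)"
    and "op_diff T S \<in> strict_limits"
proof -
  let ?f = "qrep (strict_class T)" and ?g = "qrep (strict_class S)"
  have f: "?f \<in> sfam U A" "strict_lim ?f T" and g: "?g \<in> sfam U A" "strict_lim ?g S"
    using qrep_strict_class assms by blast+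
  have "(\<lambda>i. op_diff (?f i) (?g i)) \<in> sfam U A" using f(1) g(1) by (rule sfam_diff)
  moreover have "strict_lim (\<lambda>i. op_diff (?f i) (?g i)) (op_diff T S)" using f(2) g(2) by (rule strict_lim_diff)
  moreover have "bounded_op (op_diff T S)" using assms by (intro bounded_op_diff strict_limits_bounded)
  ultimately show "qdiff U A (strict_class T) (strict_class S) = strict_class (op_diff T S)"
    and "op_diff T S \<in> strict_limits"
    unfolding qdiff_def by (rule qcls_eq_strict_class strict_limitsI)+
qed

lemma qmul_strict_class:
  assumes "T \<in> strict_limits" "S \<in> strict_limits"
  shows "qmul U A (strict_class T) (strict_class S) = strict_class (T \<circ> S)"
proof -
  let ?f = "qrep (strict_class T)" and ?g = "qrep (strict_class S)"
  have f: "?f \<in> sfam U A" "strict_lim ?f T" and g: "?g \<in> sfam U A" "strict_lim ?g S"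
    using qrep_strict_class assms by blast+
  obtain M N where "\<And>i. opnorm (?f i) \<le> M" "\<And>i. opnorm (?g i) \<le> N"
    using sfam_bounded[OF f(1)] sfam_bounded[OF g(1)] by metis
  then have "strict_lim (\<lambda>i. ?f i \<circ> ?g i) (T \<circ> S)"
    using assms f g by (intro strict_lim_comp strict_limits_bounded sfam_in_A) auto
  then show ?thesis unfolding qmul_def
    using assms by (intro qcls_eq_strict_class sfam_comp f(1) g(1) bounded_op_comp strict_limits_bounded)
qed

lemma opnorm_le_qnorm:
  assumes T: "T \<in> strict_limits"
  shows "opnorm T \<le> qnorm U A (strict_class T)"
  unfolding qnorm_def
proof (rule cInf_greatest)
  have "(\<lambda>i. op_zero) \<in> jfam U A" using sfam_const[OF A_zero] strict_lim_const by (simp add: jfam_iff)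
  then show "(\<lambda>n. Lim U (\<lambda>i. opnorm (op_diff (qrep (strict_class T) i) (n i)))) ` jfam U A \<noteq> {}"
    by blast
next
  fix r assume "r \<in> (\<lambda>n. Lim U (\<lambda>i. opnorm (op_diff (qrep (strict_class T) i) (n i)))) ` jfam U A"
  then obtain n where "n \<in> jfam U A"
    and r: "r = Lim U (\<lambda>i. opnorm (op_diff (qrep (strict_class T) i) (n i)))"
    by blast
  then have n: "n \<in> sfam U A" "strict_lim n op_zero" unfolding jfam_iff by auto
  define c where "c = (\<lambda>i. op_diff (qrep (strict_class T) i) (n i))"
  have c: "c \<in> sfam U A" "strict_lim c T"
    using strict_lim_diff[OF qrep_strict_class(2)[OF T] n(2)]
    unfolding c_def by (auto intro: sfam_diff qrep_strict_class T n)
  obtain M where "\<And>i. opnorm (c i) \<le> M" using sfam_bounded[OF c(1)] by metis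
  then have "\<And>i. opnorm (c i) \<in> {0..M}" using opnorm_nonneg[OF A_bounded[OF sfam_in_A[OF c(1)]]] by auto
  then obtain L where L: "((\<lambda>i. opnorm (c i)) \<longlongrightarrow> L) U"
    using ultrafilter_tendsto_bounded[OF ultrafilter] by metis
  have "r = L" unfolding r using tendsto_Lim[OF U_proper L] by (simp only: c_def)
  then show "opnorm T \<le> r"
    using opnorm_le_strict_lim[OF c(2) sfam_in_A[OF c(1)] strict_limits_bounded[OF T] L] by simp
qed

lemma strict_class_image_qideal: "qideal U A (strict_class ` A)"
  unfolding qideal_def
proof (intro conjI ballI allI)
  show "strict_class ` A \<subseteq> quot U A"
    using A_subset_strict_limits by (auto simp: quot_eq_strict_class_image)
  show "qzero U A \<in> strict_class ` A"
    using A_zero by (simp add: qzero_eq_strict_class)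
next
  fix X Y assume "X \<in> strict_class ` A" "Y \<in> strict_class ` A"
  then obtain a b where a: "a \<in> A" and b: "b \<in> A" and XY: "X = strict_class a" "Y = strict_class b"
    by blast
  have "qadd U A X Y = strict_class (op_add a b)"
    unfolding XY using a b A_subset_strict_limits by (simp add: qadd_strict_class subset_iff)
  then show "qadd U A X Y \<in> strict_class ` A" using A_add[OF a b] by simp
next
  fix c X assume "X \<in> strict_class ` A"
  then obtain a where a: "a \<in> A" and X: "X = strict_class a" by blast
  have "qscale U A c X = strict_class (op_scale c a)"
    unfolding X using a A_subset_strict_limits by (simp add: qscale_strict_class subset_iff)
  then show "qscale U A c X \<in> strict_class ` A" using A_scale[OF a] by simp
next
  fix X Y assume "X \<in> quot U A" "Y \<in> strict_class ` A"
  then obtain T a where T: "T \<in> strict_limits" and a: "a \<in> A"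
    and XY: "X = strict_class T" "Y = strict_class a"
    by (auto simp: quot_eq_strict_class_image)
  have "qmul U A X Y = strict_class (T \<circ> a)" "qmul U A Y X = strict_class (a \<circ> T)"
    unfolding XY using T a A_subset_strict_limits by (simp_all add: qmul_strict_class subset_iff)
  then show "qmul U A X Y \<in> strict_class ` A" and "qmul U A Y X \<in> strict_class ` A"
    using strict_limits_multiplier[OF T a] by simp_all
qed

lemma strict_class_image_qclosed: "qclosed U A (strict_class ` A)"
  unfolding qclosed_def
proof (intro ballI impI)
  fix X assume "X \<in> quot U A" and approx: "\<forall>e>0. \<exists>Y\<in>strict_class ` A. qnorm U A (qdiff U A X Y) < e"
  then obtain T where T: "T \<in> strict_limits" and X: "X = strict_class T"
    by (auto simp: quot_eq_strict_class_image)
  have "T \<in> A"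
  proof (rule A_closed[OF strict_limits_bounded[OF T]])
    fix e :: real assume "e > 0"
    then obtain a where a: "a \<in> A" and "qnorm U A (strict_class (op_diff T a)) < e"
      using approx A_subset_strict_limits T unfolding X by (force simp: qdiff_strict_class)
    moreover have "opnorm (op_diff T a) \<le> qnorm U A (strict_class (op_diff T a))"
      using a A_subset_strict_limits T by (intro opnorm_le_qnorm qdiff_strict_class(2)) auto
    ultimately show "\<exists>a\<in>A. opnorm (op_diff T a) < e" by force
  qed
  then show "X \<in> strict_class ` A" using X by blast
qed

lemma strict_class_image_qessential: "qessential U A (strict_class ` A)"
  unfolding qessential_def
proof (intro allI impI)
  fix K assume "qideal U A K \<and> K \<noteq> {qzero U A}"
  then have K_quot: "K \<subseteq> quot U A" and "qzero U A \<in> K"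
    and K_mul: "\<And>X Y. X \<in> quot U A \<Longrightarrow> Y \<in> K \<Longrightarrow> qmul U A Y X \<in> K"
    and "K \<noteq> {qzero U A}"
    unfolding qideal_def by auto
  then obtain X where "X \<in> K" "X \<noteq> qzero U A" by blast
  then obtain T where T: "T \<in> strict_limits" and X: "X = strict_class T" "T \<noteq> op_zero"
    using K_quot by (force simp: quot_eq_strict_class_image qzero_eq_strict_class)
  obtain a v where a: "a \<in> A" and Tav: "T (a v) \<noteq> 0"
    using bounded_op_eq_zero_if_annihilates[OF strict_limits_bounded[OF T]] X(2) by blast
  have a_lim: "a \<in> strict_limits" using a A_subset_strict_limits by blast
  have XA_eq: "qmul U A X (strict_class a) = strict_class (T \<circ> a)"
    unfolding X(1) using T a_lim by (rule qmul_strict_class)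
  have "qmul U A X (strict_class a) \<in> K"
    using K_mul \<open>X \<in> K\<close> a_lim by (auto simp: quot_eq_strict_class_image)
  moreover have "qmul U A X (strict_class a) \<in> strict_class ` A"
    unfolding XA_eq using strict_limits_multiplier(1)[OF T a] by blast
  moreover have "qmul U A X (strict_class a) \<noteq> qzero U A"
  proof
    assume "qmul U A X (strict_class a) = qzero U A"
    then have "T \<circ> a = op_zero"
      unfolding XA_eq qzero_eq_strict_class
      using strict_class_inj A_subset_strict_limits strict_limits_multiplier(1)[OF T a] bounded_op_zero
      by blast
    then show False using Tav by (simp add: fun_eq_iff op_zero_def)
  qed
  ultimately show "K \<inter> strict_class ` A \<noteq> {qzero U A}" by blast
qed

end

theorem lemma2p5:
  fixes U :: "'i filter" and A :: "('h::complex_hilbert \<Rightarrow> 'h) set"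
  assumes "ultrafilter U"
    and "cstar_subalgebra A"
    and "nondegenerate A"
  shows "qideal U A (const_embed U A ` A) \<and> qclosed U A (const_embed U A ` A)
         \<and> qessential U A (const_embed U A ` A)"
proof -
  interpret strict_ultrapower A U by unfold_locales (fact assms)+
  have "const_embed U A ` A = strict_class ` A"
    using const_embed_eq_strict_class by (rule image_cong[OF refl])
  then show ?thesis
    using strict_class_image_qideal strict_class_image_qclosed strict_class_image_qessential by simp
qed

end
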